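(* For any single-player extensive-form game $\Gamma$, $$\mathrm{VoR}^{\mathrm{opt}}(\Gamma)=\mathrm{VoR}^{\mathrm{bEDT}}(\Gamma)=\mathrm{VoR}^{\mathrm{bCDT}}(\Gamma)\ge 1.$$
   Context: A single-player extensive-form game consists of a finite rooted tree (nodes $\mathcal H$, leaves $\mathcal Z$, actions $A_h$), nonterminal nodes belonging to Player 1 or to chance (chance having fixed action distributions), utility $u_1:\mathcal Z\to\mathbb R_{\ge0}$, and a partition $\mathcal I_1$ of Player 1's nodes into infosets with common action sets $A_I$. A behavioral strategy $\pi$ assigns $\pi(\cdot\mid I)\in\Delta(A_I)$ to each infoset; $U_1(\pi)=\sum_z\mathbb P(z\mid\pi)u_1(z)$, with $\mathbb P(z\mid\pi)$ the reach probability. $u_1(\mathrm{opt}(\Gamma))=\max_\pi U_1(\pi)$. $\pi^{I\mapsto\sigma}$ plays $\sigma$ at $I$ and as $\pi$ elsewhere. $\pi$ is an EDT equilibrium if for all $I$, $\pi(\cdot\mid I)\in\arg\max_{\sigma\in\Delta(A_I)}U_1(\pi^{I\mapsto\sigma})$; a CDT equilibrium if $\pi$ is a Karush–Kuhn–Tucker point of maximizing $U_1$ over $\prod_I\Delta(A_I)$. $u_1(\mathrm{bEDT}(\Gamma))$, $u_1(\mathrm{bCDT}(\Gamma))$ are the maxima of $U_1$ over EDT resp. CDT equilibria. For a node $h$, $\mathrm{obs}_1(h)$ is the sequence of (infoset, action) pairs at Player 1's nodes on the root-to-$h$ path (excluding $h$); $\mathrm{pr}_1(\Gamma)$ has the same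 tree and utilities, with each infoset partitioned into the classes of $h\sim h'\iff\mathrm{obs}_1(h)=\mathrm{obs}_1(h')$. $\mathrm{VoR}^{\mathrm{SC}}(\Gamma)=u_1(\mathrm{SC}(\mathrm{pr}_1(\Gamma)))/u_1(\mathrm{SC}(\Gamma))$. *)

theory Defs
  imports "HOL-Analysis.Analysis"
begin

text \<open>Nodes are histories (lists of actions
  taken from the root); the tree is a finite prefix-closed set of histories.
  Nonterminal nodes either belong to chance (flag chance) or to Player 1.
  Player 1's nodes carry an infoset label via info.\<close>

record ('a, 'i) game =
  nodes  :: "'a list set"
  chance :: "'a list \<Rightarrow> bool"
  cprob  :: "'a list \<Rightarrow> 'a \<Rightarrow> real"
  info   :: "'a list \<Rightarrow> 'i"
  util   :: "'a list \<Rightarrow> real"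

definition acts :: "('a, 'i) game \<Rightarrow> 'a list \<Rightarrow> 'a set" where
  "acts G h = {a. h @ [a] \<in> nodes G}"

definition leaves :: "('a, 'i) game \<Rightarrow> 'a list set" where
  "leaves G = {h \<in> nodes G. acts G h = {}}"

definition p1nodes :: "('a, 'i) game \<Rightarrow> 'a list set" where
  "p1nodes G = {h \<in> nodes G. acts G h \<noteq> {} \<and> \<not> chance G h}"

definition infosets :: "('a, 'i) game \<Rightarrow> 'i set" where
  "infosets G = info G ` p1nodes G"

definition infoacts :: "('a, 'i) game \<Rightarrow> 'i \<Rightarrow> 'a set" where
  "infoacts G I = (\<Union>h \<in> {h \<in> p1nodes G. info G h = I}. acts G h)"

definition distrib_on :: "'a set \<Rightarrow> ('a \<Rightarrow> real) set" where
  "distrib_on A = {\<sigma>. (\<forall>a\<in>A. 0 \<le> \<sigma> a) \<and> sum \<sigma> A = 1}"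

definition wf_game :: "('a, 'i) game \<Rightarrow> bool" where
  "wf_game G \<longleftrightarrow>
     finite (nodes G) \<and> [] \<in> nodes G \<and>
     (\<forall>h a. h @ [a] \<in> nodes G \<longrightarrow> h \<in> nodes G) \<and>
     (\<forall>h \<in> nodes G. acts G h \<noteq> {} \<and> chance G h \<longrightarrow>
        cprob G h \<in> distrib_on (acts G h)) \<and>
     (\<forall>h \<in> p1nodes G. \<forall>h' \<in> p1nodes G. info G h = info G h' \<longrightarrow> acts G h = acts G h') \<and>
     (\<forall>z \<in> leaves G. 0 \<le> util G z)"

definition strategies :: "('a, 'i) game \<Rightarrow> ('i \<Rightarrow> 'a \<Rightarrow> real) set" where
  "strategies G = {\<pi>. \<forall>I \<in> infosets G. \<pi> I \<in> distrib_on (infoacts G I)}"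

definition reach :: "('a, 'i) game \<Rightarrow> ('i \<Rightarrow> 'a \<Rightarrow> real) \<Rightarrow> 'a list \<Rightarrow> real" where
  "reach G \<pi> z = (\<Prod>k < length z.
      if chance G (take k z) then cprob G (take k z) (z ! k) else \<pi> (info G (take k z)) (z ! k))"

definition U :: "('a, 'i) game \<Rightarrow> ('i \<Rightarrow> 'a \<Rightarrow> real) \<Rightarrow> real" where
  "U G \<pi> = (\<Sum>z \<in> leaves G. reach G \<pi> z * util G z)"

definition u_opt :: "('a, 'i) game \<Rightarrow> real" where
  "u_opt G = Sup (U G ` strategies G)"

definition EDT_eq :: "('a, 'i) game \<Rightarrow> ('i \<Rightarrow> 'a \<Rightarrow> real) \<Rightarrow> bool" where
  "EDT_eq G \<pi> \<longleftrightarrow> \<pi> \<in> strategies G \<and>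
     (\<forall>I \<in> infosets G. \<forall>\<sigma> \<in> distrib_on (infoacts G I). U G (\<pi>(I := \<sigma>)) \<le> U G \<pi>)"

definition pdU :: "('a, 'i) game \<Rightarrow> ('i \<Rightarrow> 'a \<Rightarrow> real) \<Rightarrow> 'i \<Rightarrow> 'a \<Rightarrow> real" where
  "pdU G \<pi> I a = deriv (\<lambda>t. U G (\<pi>(I := (\<pi> I)(a := t)))) (\<pi> I a)"

text \<open>KKT point of maximizing U over the product of simplices
  (constraints -x(a|I) \<le> 0 with multipliers \<mu>, \<Sum>_a x(a|I) = 1 with multiplier \<lambda>).\<close>

definition CDT_eq :: "('a, 'i) game \<Rightarrow> ('i \<Rightarrow> 'a \<Rightarrow> real) \<Rightarrow> bool" where
  "CDT_eq G \<pi> \<longleftrightarrow> \<pi> \<in> strategies G \<and>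
     (\<forall>I \<in> infosets G. \<exists>lam::real. \<exists>\<mu>::'a \<Rightarrow> real. \<forall>a \<in> infoacts G I.
        0 \<le> \<mu> a \<and> \<mu> a * \<pi> I a = 0 \<and> pdU G \<pi> I a + \<mu> a = lam)"

definition u_bEDT :: "('a, 'i) game \<Rightarrow> real" where
  "u_bEDT G = Sup (U G ` {\<pi>. EDT_eq G \<pi>})"

definition u_bCDT :: "('a, 'i) game \<Rightarrow> real" where
  "u_bCDT G = Sup (U G ` {\<pi>. CDT_eq G \<pi>})"

definition obs :: "('a, 'i) game \<Rightarrow> 'a list \<Rightarrow> ('i \<times> 'a) list" where
  "obs G h = map (\<lambda>k. (info G (take k h), h ! k))
               (filter (\<lambda>k. \<not> chance G (take k h)) [0..<length h])"

definition pr1 :: "('a, 'i) game \<Rightarrow> ('a, 'i \<times> ('i \<times> 'a) list) game" where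
  "pr1 G = \<lparr> nodes = nodes G, chance = chance G, cprob = cprob G,
             info = (\<lambda>h. (info G h, obs G h)), util = util G \<rparr>"

definition VoR_opt :: "('a, 'i) game \<Rightarrow> real" where
  "VoR_opt G = u_opt (pr1 G) / u_opt G"

definition VoR_bEDT :: "('a, 'i) game \<Rightarrow> real" where
  "VoR_bEDT G = u_bEDT (pr1 G) / u_bEDT G"

definition VoR_bCDT :: "('a, 'i) game \<Rightarrow> real" where
  "VoR_bCDT G = u_bCDT (pr1 G) / u_bCDT G"

end

(*
  U is continuous on the product of simplices, which is compact once the coordinates outside
  the infosets are zeroed, so every game has an optimal strategy. An optimal strategy is an
  EDT equilibrium, since a deviation at one infoset is again a strategy, and a CDT equilibrium:
  if U increased along the move of probability mass from a supported action a to an action b,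
  a small such move would improve on the optimum, so the supported actions maximise the partial
  derivative, which yields the KKT multipliers. Hence u(bEDT) = u(bCDT) = u(opt) in every game,
  in particular in both G and pr1 G, and the three ratios coincide. Finally a strategy of G,
  composed with the projection forgetting the extra observation, is a strategy of pr1 G with the
  same reach probabilities, so u(opt(G)) <= u(opt(pr1 G)).
*)
theory Submission
  imports Defs
begin

lemma wf_game_prefix_closed:
  assumes "wf_game G" "h @ ys \<in> nodes G"
  shows "h \<in> nodes G"
  using assms(2)
proof (induction ys rule: rev_induct)
  case (snoc y ys)
  then show ?case using assms(1) unfolding wf_game_def by (metis append_assoc)
qed simp

lemma take_in_nodes_nth_in_acts:
  assumes "wf_game G" "z \<in> nodes G" "k < length z"
  shows "take k z \<in> nodes G \<and> z ! k \<in> acts G (take k z)"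
proof -
  have "take (Suc k) z \<in> nodes G"
    using wf_game_prefix_closed[OF assms(1), of _ "drop (Suc k) z"] assms(2) by simp
  then have "take k z @ [z ! k] \<in> nodes G"
    using assms(3) by (simp add: take_Suc_conv_app_nth)
  then show ?thesis
    using wf_game_prefix_closed[OF assms(1)] by (auto simp: acts_def)
qed

lemma info_take_in_infosets:
  assumes "wf_game G" "z \<in> nodes G" "k < length z" "\<not> chance G (take k z)"
  shows "info G (take k z) \<in> infosets G \<and> z ! k \<in> infoacts G (info G (take k z))"
proof -
  have "take k z \<in> p1nodes G" "z ! k \<in> acts G (take k z)"
    using take_in_nodes_nth_in_acts[OF assms(1-3)] assms(4) by (auto simp: p1nodes_def)
  then show ?thesis by (auto simp: infosets_def infoacts_def)
qed

lemma finite_acts: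
  assumes "wf_game G"
  shows "finite (acts G h)"
proof -
  have "acts G h \<subseteq> last ` nodes G" unfolding acts_def by force
  then show ?thesis using assms finite_surj by (auto simp: wf_game_def)
qed

lemma infoacts_info:
  assumes "wf_game G" "h \<in> p1nodes G"
  shows "infoacts G (info G h) = acts G h"
  using assms unfolding wf_game_def infoacts_def by blast

lemma infoacts_finite_nonempty:
  assumes "wf_game G" "I \<in> infosets G"
  shows "finite (infoacts G I) \<and> infoacts G I \<noteq> {}"
proof -
  obtain h where "h \<in> p1nodes G" "I = info G h" using assms(2) by (auto simp: infosets_def)
  then show ?thesis
    using infoacts_info[OF assms(1)] finite_acts[OF assms(1)] by (auto simp: p1nodes_def)
qed

lemma U_cong:
  assumes "wf_game G" "\<And>I a. I \<in> infosets G \<Longrightarrow> a \<in> infoacts G I \<Longrightarrow> \<pi> I a = \<pi>' I a"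
  shows "U G \<pi> = U G \<pi>'"
  unfolding U_def reach_def
proof (intro sum.cong refl arg_cong2[where f = "(*)"] prod.cong)
  fix z k assume "z \<in> leaves G" "k \<in> {..<length z}"
  then show "(if chance G (take k z) then cprob G (take k z) (z ! k) else \<pi> (info G (take k z)) (z ! k)) =
        (if chance G (take k z) then cprob G (take k z) (z ! k) else \<pi>' (info G (take k z)) (z ! k))"
    using info_take_in_infosets[OF assms(1)] assms(2) by (auto simp: leaves_def)
qed

lemma strategy_le_1:
  assumes "wf_game G" "\<pi> \<in> strategies G" "I \<in> infosets G" "a \<in> infoacts G I"
  shows "\<pi> I a \<le> 1"
proof -
  have "\<pi> I \<in> distrib_on (infoacts G I)" using assms(2,3) by (simp add: strategies_def)
  moreover have "\<pi> I a \<le> sum (\<pi> I) (infoacts G I)"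
    using calculation infoacts_finite_nonempty[OF assms(1,3)] assms(4)
    by (intro member_le_sum) (auto simp: distrib_on_def)
  ultimately show ?thesis by (simp add: distrib_on_def)
qed

lemma strategies_nonempty:
  assumes "wf_game G"
  shows "strategies G \<noteq> {}"
proof -
  define \<pi> where "\<pi> I a = (if a = (SOME a. a \<in> infoacts G I) then 1 else 0 :: real)" for I a
  have "\<pi> I \<in> distrib_on (infoacts G I)" if "I \<in> infosets G" for I
  proof -
    have "(SOME a. a \<in> infoacts G I) \<in> infoacts G I"
      using infoacts_finite_nonempty[OF assms that] by (simp add: some_in_eq)
    then show ?thesis
      using infoacts_finite_nonempty[OF assms that]
      by (simp add: distrib_on_def \<pi>_def sum.delta' del: some_in_eq)
  qed
  then show ?thesis by (auto simp: strategies_def)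
qed

text \<open>Coordinates outside the infosets do not matter; zeroing them makes the
  strategy space compact.\<close>

definition restrict_strategy :: "('a, 'i) game \<Rightarrow> ('i \<Rightarrow> 'a \<Rightarrow> real) \<Rightarrow> 'i \<Rightarrow> 'a \<Rightarrow> real" where
  "restrict_strategy G \<pi> I a = (if I \<in> infosets G \<and> a \<in> infoacts G I then \<pi> I a else 0)"

lemma U_restrict_strategy:
  assumes "wf_game G"
  shows "U G (restrict_strategy G \<pi>) = U G \<pi>"
  using assms by (rule U_cong) (simp add: restrict_strategy_def)

lemma restrict_strategy_in_strategies:
  assumes "\<pi> \<in> strategies G"
  shows "restrict_strategy G \<pi> \<in> strategies G"
proof -
  have "restrict_strategy G \<pi> I \<in> distrib_on (infoacts G I)" if "I \<in> infosets G" for I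
  proof -
    have "sum (restrict_strategy G \<pi> I) (infoacts G I) = sum (\<pi> I) (infoacts G I)"
      using that by (intro sum.cong) (simp_all add: restrict_strategy_def)
    then show ?thesis
      using assms that by (simp add: strategies_def distrib_on_def restrict_strategy_def)
  qed
  then show ?thesis by (simp add: strategies_def)
qed

lemma compact_Pi_UNIV:
  fixes S :: "'i \<Rightarrow> ('b::topological_space) set"
  assumes "\<And>i. compact (S i)"
  shows "compact (Pi UNIV S)"
proof -
  have "compactin (product_topology (\<lambda>i. euclidean) UNIV) (PiE UNIV S)"
    using assms by (simp add: compactin_PiE)
  then show ?thesis by (simp add: euclidean_product_topology PiE_UNIV_domain)
qed

lemma continuous_on_coordinate2: "continuous_on UNIV (\<lambda>\<pi> :: 'i \<Rightarrow> 'a \<Rightarrow> real. \<pi> I a)"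
  using continuous_on_product_then_coordinatewise[OF continuous_on_product_coordinates] .

lemma continuous_on_U: "continuous_on UNIV (U G)"
proof -
  have "continuous_on UNIV (\<lambda>\<pi>. if chance G (take k z) then cprob G (take k z) (z ! k)
          else \<pi> (info G (take k z)) (z ! k))" for k z
    by (cases "chance G (take k z)") (simp_all add: continuous_on_coordinate2)
  then show ?thesis
    unfolding U_def reach_def
    by (intro continuous_on_sum continuous_on_mult continuous_on_prod continuous_on_const)
qed

lemma closed_strategies: "closed (strategies G)"
proof -
  have "strategies G = (\<Inter>I\<in>infosets G. (\<Inter>a\<in>infoacts G I. {\<pi>. 0 \<le> \<pi> I a}) \<inter>
                                          {\<pi>. sum (\<pi> I) (infoacts G I) = 1})"
    by (auto simp: strategies_def distrib_on_def)
  then show ?thesis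
    by (auto intro!: closed_INT closed_Int closed_Collect_le closed_Collect_eq continuous_on_sum
        continuous_on_coordinate2 continuous_on_const)
qed

lemma compact_restricted_strategies:
  assumes "wf_game G"
  shows "compact (restrict_strategy G ` strategies G)"
proof -
  define K where "K I a = (if I \<in> infosets G \<and> a \<in> infoacts G I then {0..1} else {0::real})" for I a
  have "restrict_strategy G ` strategies G = Pi UNIV (\<lambda>I. Pi UNIV (K I)) \<inter> strategies G"
  proof (intro equalityI subsetI)
    fix \<pi> assume "\<pi> \<in> restrict_strategy G ` strategies G"
    then obtain \<pi>' where "\<pi>' \<in> strategies G" "\<pi> = restrict_strategy G \<pi>'" by blast
    then show "\<pi> \<in> Pi UNIV (\<lambda>I. Pi UNIV (K I)) \<inter> strategies G"
      using strategy_le_1[OF assms] restrict_strategy_in_strategies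
      by (auto simp: K_def restrict_strategy_def strategies_def distrib_on_def)
  next
    fix \<pi> assume "\<pi> \<in> Pi UNIV (\<lambda>I. Pi UNIV (K I)) \<inter> strategies G"
    then have box: "\<pi> I a \<in> K I a" for I a by auto
    have "restrict_strategy G \<pi> I a = \<pi> I a" for I a
      using box[of I a] by (auto simp: K_def restrict_strategy_def split: if_splits)
    then have "restrict_strategy G \<pi> = \<pi>" by blast
    then show "\<pi> \<in> restrict_strategy G ` strategies G"
      using \<open>\<pi> \<in> _ \<inter> strategies G\<close> by (metis IntD2 image_eqI)
  qed
  moreover have "compact (Pi UNIV (\<lambda>I. Pi UNIV (K I)))"
    by (intro compact_Pi_UNIV) (simp add: K_def)
  ultimately show ?thesis by (simp add: compact_Int_closed closed_strategies)
qed

definition optimal_strategy :: "('a, 'i) game \<Rightarrow> ('i \<Rightarrow> 'a \<Rightarrow> real) \<Rightarrow> bool" where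
  "optimal_strategy G \<pi> \<longleftrightarrow> \<pi> \<in> strategies G \<and> (\<forall>\<pi>' \<in> strategies G. U G \<pi>' \<le> U G \<pi>)"

lemma optimal_strategy_exists:
  assumes "wf_game G"
  shows "\<exists>\<pi>. optimal_strategy G \<pi>"
proof -
  have "restrict_strategy G ` strategies G \<noteq> {}" using strategies_nonempty[OF assms] by simp
  moreover have "continuous_on (restrict_strategy G ` strategies G) (U G)"
    using continuous_on_U by (rule continuous_on_subset) simp
  ultimately obtain \<pi> where \<pi>: "\<pi> \<in> strategies G"
    and max: "\<forall>\<pi>' \<in> strategies G. U G (restrict_strategy G \<pi>') \<le> U G (restrict_strategy G \<pi>)"
    using continuous_attains_sup[OF compact_restricted_strategies[OF assms]] by auto
  have "optimal_strategy G (restrict_strategy G \<pi>)"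
    using \<pi> max
    by (simp add: optimal_strategy_def restrict_strategy_in_strategies U_restrict_strategy[OF assms])
  then show ?thesis by blast
qed

section \<open>First-order conditions at an optimum\<close>

definition reach_factor :: "('a, 'i) game \<Rightarrow> ('i \<Rightarrow> 'a \<Rightarrow> real) \<Rightarrow> 'a list \<Rightarrow> nat \<Rightarrow> real" where
  "reach_factor G \<pi> z k =
     (if chance G (take k z) then cprob G (take k z) (z ! k) else \<pi> (info G (take k z)) (z ! k))"

definition reach_factor_slope :: "('a, 'i) game \<Rightarrow> 'i \<Rightarrow> ('a \<Rightarrow> real) \<Rightarrow> 'a list \<Rightarrow> nat \<Rightarrow> real" where
  "reach_factor_slope G I d z k =
     (if \<not> chance G (take k z) \<and> info G (take k z) = I then d (z ! k) else 0)"

text \<open>The derivative of U at \<pi> when \<pi> I moves in direction d.\<close>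

definition U_slope :: "('a, 'i) game \<Rightarrow> ('i \<Rightarrow> 'a \<Rightarrow> real) \<Rightarrow> 'i \<Rightarrow> ('a \<Rightarrow> real) \<Rightarrow> real" where
  "U_slope G \<pi> I d = (\<Sum>z\<in>leaves G. (\<Sum>k<length z. reach_factor_slope G I d z k *
       (\<Prod>j\<in>{..<length z} - {k}. reach_factor G \<pi> z j)) * util G z)"

lemma U_eq_sum_prod_reach_factor:
  "U G \<pi> = (\<Sum>z\<in>leaves G. (\<Prod>k<length z. reach_factor G \<pi> z k) * util G z)"
  unfolding U_def reach_def reach_factor_def ..

lemma reach_factor_affine:
  "reach_factor G (\<pi>(I := \<lambda>c. x c + s * d c)) z k =
     reach_factor G (\<pi>(I := x)) z k + s * reach_factor_slope G I d z k"
  by (simp add: reach_factor_def reach_factor_slope_def)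

lemma has_real_derivative_prod_affine:
  "((\<lambda>s. \<Prod>k\<in>K. a k + s * b k) has_real_derivative
     (\<Sum>k\<in>K. b k * (\<Prod>j\<in>K - {k}. a j + s0 * b j))) (at s0)"
proof -
  have "((\<lambda>s. \<Prod>k\<in>K. a k + s * b k) has_derivative
          (\<lambda>y. \<Sum>k\<in>K. (y * b k) * (\<Prod>j\<in>K - {k}. a j + s0 * b j))) (at s0)"
    by (rule has_derivative_prod) (auto intro!: derivative_eq_intros)
  then show ?thesis unfolding has_field_derivative_def
    by (rule has_derivative_eq_rhs) (auto simp: sum_distrib_left algebra_simps)
qed

lemma U_affine_has_real_derivative:
  "((\<lambda>s. U G (\<pi>(I := \<lambda>c. x c + s * d c))) has_real_derivative
      U_slope G (\<pi>(I := \<lambda>c. x c + s0 * d c)) I d) (at s0)"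
proof -
  have "((\<lambda>s. \<Sum>z\<in>leaves G. (\<Prod>k<length z. reach_factor G (\<pi>(I := x)) z k +
            s * reach_factor_slope G I d z k) * util G z)
     has_real_derivative (\<Sum>z\<in>leaves G. (\<Sum>k<length z. reach_factor_slope G I d z k *
        (\<Prod>j\<in>{..<length z} - {k}. reach_factor G (\<pi>(I := x)) z j +
            s0 * reach_factor_slope G I d z j)) * util G z)) (at s0)"
    by (intro DERIV_sum DERIV_cmult_right has_real_derivative_prod_affine)
  then show ?thesis
    by (simp add: U_eq_sum_prod_reach_factor U_slope_def reach_factor_affine)
qed

lemma pdU_eq_U_slope: "pdU G \<pi> I a = U_slope G \<pi> I (\<lambda>c. if c = a then 1 else 0)"
proof -
  define x where "x = (\<pi> I)(a := 0)"
  define d where "d = (\<lambda>c. if c = a then 1 else 0 :: real)"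
  have line: "(\<pi> I)(a := t) = (\<lambda>c. x c + t * d c)" for t
    by (auto simp: x_def d_def)
  have "\<pi>(I := \<lambda>c. x c + \<pi> I a * d c) = \<pi>"
    by (auto simp: x_def d_def fun_eq_iff)
  then show ?thesis
    unfolding pdU_def line using DERIV_imp_deriv[OF U_affine_has_real_derivative[of G \<pi> I x d "\<pi> I a"]]
    by (simp add: d_def)
qed

lemma U_slope_diff: "U_slope G \<pi> I (\<lambda>c. f c - g c) = U_slope G \<pi> I f - U_slope G \<pi> I g"
proof -
  have "reach_factor_slope G I (\<lambda>c. f c - g c) z k =
          reach_factor_slope G I f z k - reach_factor_slope G I g z k" for z k
    by (simp add: reach_factor_slope_def)
  then show ?thesis
    unfolding U_slope_def by (simp add: left_diff_distrib sum_subtractf)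
qed

definition move_mass :: "('a \<Rightarrow> real) \<Rightarrow> 'a \<Rightarrow> 'a \<Rightarrow> real \<Rightarrow> 'a \<Rightarrow> real" where
  "move_mass \<sigma> a b s = (\<lambda>c. \<sigma> c + s * ((if c = b then 1 else 0) - (if c = a then 1 else 0)))"

lemma move_mass_in_distrib_on:
  assumes "\<sigma> \<in> distrib_on A" "finite A" "a \<in> A" "b \<in> A" "0 \<le> s" "s \<le> \<sigma> a"
  shows "move_mass \<sigma> a b s \<in> distrib_on A"
proof -
  have "sum (move_mass \<sigma> a b s) A = sum \<sigma> A"
    using assms(2-4) by (simp add: move_mass_def sum.distrib sum_subtractf flip: sum_distrib_left)
  moreover have "0 \<le> move_mass \<sigma> a b s c" if "c \<in> A" for c
    using assms that by (auto simp: move_mass_def distrib_on_def)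
  ultimately show ?thesis using assms(1) by (simp add: distrib_on_def)
qed

lemma U_move_mass_has_real_derivative:
  "((\<lambda>s. U G (\<pi>(I := move_mass (\<pi> I) a b s))) has_real_derivative pdU G \<pi> I b - pdU G \<pi> I a)
     (at 0)"
  using U_affine_has_real_derivative[of G \<pi> I "\<pi> I"
      "\<lambda>c. (if c = b then 1 else 0) - (if c = a then 1 else 0)" 0]
  unfolding move_mass_def by (simp add: U_slope_diff pdU_eq_U_slope)

text \<open>Otherwise a small move of mass from a to b would improve on the optimum.\<close>

lemma optimal_strategy_pdU_le:
  assumes "wf_game G" "optimal_strategy G \<pi>" "I \<in> infosets G"
    and "a \<in> infoacts G I" "b \<in> infoacts G I" "0 < \<pi> I a"
  shows "pdU G \<pi> I b \<le> pdU G \<pi> I a"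
proof (rule ccontr)
  assume "\<not> ?thesis"
  then have "0 < pdU G \<pi> I b - pdU G \<pi> I a" by simp
  from DERIV_pos_inc_right[OF U_move_mass_has_real_derivative this]
  obtain \<delta> where "\<delta> > 0" and "\<And>s. 0 < s \<Longrightarrow> s < \<delta> \<Longrightarrow>
      U G (\<pi>(I := move_mass (\<pi> I) a b 0)) < U G (\<pi>(I := move_mass (\<pi> I) a b (0 + s)))"
    by blast
  then have increasing: "\<And>s. 0 < s \<Longrightarrow> s < \<delta> \<Longrightarrow> U G \<pi> < U G (\<pi>(I := move_mass (\<pi> I) a b s))"
    by (simp add: move_mass_def)
  define s where "s = min (\<delta> / 2) (\<pi> I a)"
  have "\<pi> I \<in> distrib_on (infoacts G I)"
    using assms(2,3) by (simp add: optimal_strategy_def strategies_def)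
  then have "move_mass (\<pi> I) a b s \<in> distrib_on (infoacts G I)"
    using assms(4-6) \<open>\<delta> > 0\<close> infoacts_finite_nonempty[OF assms(1,3)]
    by (intro move_mass_in_distrib_on) (auto simp: s_def)
  then have "U G (\<pi>(I := move_mass (\<pi> I) a b s)) \<le> U G \<pi>"
    using assms(2) by (auto simp: optimal_strategy_def strategies_def)
  moreover have "U G \<pi> < U G (\<pi>(I := move_mass (\<pi> I) a b s))"
    using \<open>\<delta> > 0\<close> assms(6) by (intro increasing) (auto simp: s_def)
  ultimately show False by simp
qed

lemma KKT_multipliers_exist:
  fixes f x :: "'a \<Rightarrow> real"
  assumes "finite A" "\<And>a b. a \<in> A \<Longrightarrow> b \<in> A \<Longrightarrow> x a \<noteq> 0 \<Longrightarrow> f b \<le> f a"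
  shows "\<exists>lam \<mu>. \<forall>a\<in>A. 0 \<le> \<mu> a \<and> \<mu> a * x a = 0 \<and> f a + \<mu> a = lam"
proof (intro exI ballI conjI)
  fix a assume "a \<in> A"
  show "0 \<le> Max (f ` A) - f a" using assms(1) \<open>a \<in> A\<close> by simp
  show "(Max (f ` A) - f a) * x a = 0"
  proof (cases "x a = 0")
    case False
    then have "Max (f ` A) = f a" using assms \<open>a \<in> A\<close> by (intro Max_eqI) auto
    then show ?thesis by simp
  qed simp
  show "f a + (Max (f ` A) - f a) = Max (f ` A)" by simp
qed

lemma optimal_strategy_CDT_eq:
  assumes "wf_game G" "optimal_strategy G \<pi>"
  shows "CDT_eq G \<pi>"
  unfolding CDT_eq_def
proof (intro conjI ballI)
  show "\<pi> \<in> strategies G" using assms(2) by (simp add: optimal_strategy_def)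
  fix I assume I: "I \<in> infosets G"
  have "0 \<le> \<pi> I a" if "a \<in> infoacts G I" for a
    using assms(2) I that by (auto simp: optimal_strategy_def strategies_def distrib_on_def)
  then show "\<exists>lam \<mu>. \<forall>a\<in>infoacts G I. 0 \<le> \<mu> a \<and> \<mu> a * \<pi> I a = 0 \<and> pdU G \<pi> I a + \<mu> a = lam"
    using infoacts_finite_nonempty[OF assms(1) I] optimal_strategy_pdU_le[OF assms I]
    by (intro KKT_multipliers_exist) (auto simp: order.order_iff_strict)
qed

section \<open>Optimal strategies are the best equilibria\<close>

lemma optimal_strategy_EDT_eq:
  assumes "optimal_strategy G \<pi>"
  shows "EDT_eq G \<pi>"
  using assms by (auto simp: optimal_strategy_def EDT_eq_def strategies_def)

lemma Sup_U_optimal_strategy: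
  assumes "optimal_strategy G \<pi>" "\<pi> \<in> A" "A \<subseteq> strategies G"
  shows "Sup (U G ` A) = U G \<pi>"
  using assms by (intro cSup_eq_maximum) (auto simp: optimal_strategy_def)

lemma u_opt_optimal_strategy:
  assumes "optimal_strategy G \<pi>"
  shows "u_opt G = U G \<pi>"
  unfolding u_opt_def
  by (rule Sup_U_optimal_strategy[OF assms]) (use assms in \<open>simp_all add: optimal_strategy_def\<close>)

lemma u_bEDT_eq_u_opt:
  assumes "wf_game G"
  shows "u_bEDT G = u_opt G"
proof -
  obtain \<pi> where opt: "optimal_strategy G \<pi>" using optimal_strategy_exists[OF assms] by blast
  have "u_bEDT G = U G \<pi>"
    unfolding u_bEDT_def
    by (rule Sup_U_optimal_strategy[OF opt])
      (use optimal_strategy_EDT_eq[OF opt] in \<open>auto simp: EDT_eq_def\<close>)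
  then show ?thesis by (simp add: u_opt_optimal_strategy[OF opt])
qed

lemma u_bCDT_eq_u_opt:
  assumes "wf_game G"
  shows "u_bCDT G = u_opt G"
proof -
  obtain \<pi> where opt: "optimal_strategy G \<pi>" using optimal_strategy_exists[OF assms] by blast
  have "u_bCDT G = U G \<pi>"
    unfolding u_bCDT_def
    by (rule Sup_U_optimal_strategy[OF opt])
      (use optimal_strategy_CDT_eq[OF assms opt] in \<open>auto simp: CDT_eq_def\<close>)
  then show ?thesis by (simp add: u_opt_optimal_strategy[OF opt])
qed

section \<open>Perfect recall refinement\<close>

lemma pr1_simps [simp]:
  "nodes (pr1 G) = nodes G" "chance (pr1 G) = chance G" "cprob (pr1 G) = cprob G"
  "info (pr1 G) = (\<lambda>h. (info G h, obs G h))" "util (pr1 G) = util G"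
  by (simp_all add: pr1_def)

lemma acts_pr1 [simp]: "acts (pr1 G) = acts G"
  by (simp add: acts_def[abs_def])

lemma leaves_pr1 [simp]: "leaves (pr1 G) = leaves G"
  by (simp add: leaves_def)

lemma p1nodes_pr1 [simp]: "p1nodes (pr1 G) = p1nodes G"
  by (simp add: p1nodes_def)

lemma wf_game_pr1:
  assumes "wf_game G"
  shows "wf_game (pr1 G)"
proof -
  have "\<forall>h \<in> p1nodes G. \<forall>h' \<in> p1nodes G.
          (info G h, obs G h) = (info G h', obs G h') \<longrightarrow> acts G h = acts G h'"
    using assms unfolding wf_game_def by blast
  then show ?thesis
    using assms unfolding wf_game_def pr1_simps acts_pr1 leaves_pr1 p1nodes_pr1 by blast
qed

lemma strategy_fst_pr1:
  assumes "wf_game G" "\<pi> \<in> strategies G"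
  shows "\<pi> \<circ> fst \<in> strategies (pr1 G)"
  unfolding strategies_def
proof (intro CollectI ballI)
  fix J assume "J \<in> infosets (pr1 G)"
  then obtain h where h: "h \<in> p1nodes G" "J = (info G h, obs G h)"
    by (auto simp: infosets_def)
  have "infoacts (pr1 G) J = infoacts G (info G h)"
    using infoacts_info[OF wf_game_pr1[OF assms(1)], of h] infoacts_info[OF assms(1) h(1)] h by simp
  moreover have "info G h \<in> infosets G" using h(1) by (simp add: infosets_def)
  ultimately show "(\<pi> \<circ> fst) J \<in> distrib_on (infoacts (pr1 G) J)"
    using assms(2) h(2) by (simp add: strategies_def)
qed

lemma U_fst_pr1: "U (pr1 G) (\<pi> \<circ> fst) = U G \<pi>"
  by (simp add: U_def reach_def cong: if_cong)

lemma u_opt_le_u_opt_pr1: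
  assumes "wf_game G"
  shows "u_opt G \<le> u_opt (pr1 G)"
proof -
  obtain \<pi> where \<pi>: "optimal_strategy G \<pi>" using optimal_strategy_exists[OF assms] by blast
  obtain \<pi>' where \<pi>': "optimal_strategy (pr1 G) \<pi>'"
    using optimal_strategy_exists[OF wf_game_pr1[OF assms]] by blast
  have "U G \<pi> = U (pr1 G) (\<pi> \<circ> fst)" by (simp add: U_fst_pr1)
  also have "\<dots> \<le> U (pr1 G) \<pi>'"
    using \<pi> \<pi>' strategy_fst_pr1[OF assms] by (simp add: optimal_strategy_def)
  finally show ?thesis
    by (simp add: u_opt_optimal_strategy[OF \<pi>] u_opt_optimal_strategy[OF \<pi>'])
qed

theorem proposition3:
  fixes G :: "('a, 'i) game"
  assumes "wf_game G"
  shows "VoR_opt G = VoR_bEDT G \<and> VoR_bEDT G = VoR_bCDT G \<and>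
         (u_opt G > 0 \<longrightarrow> VoR_bCDT G \<ge> 1)"
proof -
  have G: "u_bEDT G = u_opt G" "u_bCDT G = u_opt G"
    using assms by (simp_all add: u_bEDT_eq_u_opt u_bCDT_eq_u_opt)
  have pr1_G: "u_bEDT (pr1 G) = u_opt (pr1 G)" "u_bCDT (pr1 G) = u_opt (pr1 G)"
    using wf_game_pr1[OF assms] by (simp_all add: u_bEDT_eq_u_opt u_bCDT_eq_u_opt)
  have "VoR_bCDT G \<ge> 1" if "u_opt G > 0"
    using that u_opt_le_u_opt_pr1[OF assms] by (simp add: VoR_bCDT_def G pr1_G le_divide_eq_1)
  then show ?thesis by (simp add: VoR_opt_def VoR_bEDT_def VoR_bCDT_def G pr1_G)
qed

end
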